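(* Let $\boldsymbol\Delta=(\Delta_1,\dots,\Delta_9)$ be a probability vector, let $p_1,p_2,\dots\in[0,1]$, and let $X_1,X_2,\dots$ be independent random joint genotypes with $X_i$ taking values $x\in\{0000,1111,1101,0111,0101,1100,0011,0100,0001\}$ with probabilities $f^{(i)}_x$ given, with $p=p_i$, $q=1-p_i$, by \begin{align*} f_{0000} &= q\Delta_1 + q^2(\Delta_2+\Delta_3+\Delta_5+\Delta_7)+q^3(\Delta_4+\Delta_6+\Delta_8)+q^4\Delta_9,\\ f_{1111} &= p\Delta_1 + p^2(\Delta_2+\Delta_3+\Delta_5+\Delta_7)+p^3(\Delta_4+\Delta_6+\Delta_8)+p^4\Delta_9,\\ f_{1101} &= pq\bigl(\Delta_3 + p(\Delta_8+2\Delta_4+2p\Delta_9)\bigr),\quad f_{0111} = pq\bigl(\Delta_5 + p(\Delta_8+2\Delta_6+2p\Delta_9)\bigr),\\ f_{0101} &= pq\bigl(2\Delta_7+q\Delta_8+4pq\Delta_9\bigr),\\ f_{1100} &= pq\bigl(\Delta_2+q\Delta_4+p\Delta_6+pq\Delta_9\bigr),\quad f_{0011} = pq\bigl(\Delta_2+q\Delta_6+p\Delta_4+pq\Delta_9\bigr),\\ f_{0100} &= pq\bigl(\Delta_5+q\Delta_8+2q\Delta_6+2q^2\Delta_9\bigr),\quad f_{0001} = pq\bigl(\Delta_3+q\Delta_8+2q\Delta_4+2q^2\Delta_9\bigr). \end{align*} For each $n$ let $\hat f_x=\frac1n\sum_{i=1}^n\mathbf 1\{X_i=x\}$ and define \begin{align*}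 \hat\tau_{1\mathrm A}&=\tfrac12(\hat f_{1101}+\hat f_{0100})+\tfrac14\hat f_{0101}+\hat f_{1100}, & \hat\tau_{1\mathrm B}&=\tfrac12(\hat f_{0111}+\hat f_{0001})+\tfrac14\hat f_{0101}+\hat f_{0011},\\ \hat\tau_1&=\tfrac12(\hat\tau_{1\mathrm A}+\hat\tau_{1\mathrm B}),\\ \hat\tau_{2\mathrm A}&=\tfrac12(\hat f_{0111}+\hat f_{0101}+\hat f_{0100}), & \hat\tau_{2\mathrm B}&=\tfrac12(\hat f_{1101}+\hat f_{0101}+\hat f_{0001}),\\ \hat\tau_3&=\tfrac14\bigl((\hat f_{0100}-\hat f_{0111})+(\hat f_{0001}-\hat f_{1101})\bigr), & \hat\tau_4&=\tfrac12(\hat f_{1100}-\hat f_{0011}), \end{align*} $\bar\nu_2=\frac1n\sum_{i=1}^n p_i(1-p_i)$, $\bar\nu_3=\frac1n\sum_{i=1}^n p_i(1-p_i)(1-2p_i)$, and the estimators \[ \hat\theta_1=1-\frac{\hat\tau_1}{\bar\nu_2},\quad \hat\theta_{2\mathrm A}=1-\frac{\hat\tau_{2\mathrm A}}{\bar\nu_2},\quad \hat\theta_{2\mathrm B}=1-\frac{\hat\tau_{2\mathrm B}}{\bar\nu_2},\quad \hat\theta_3=1-\frac{\hat\tau_3}{\bar\nu_3},\quad \hat\theta_4=\frac{\hat\tau_4}{\bar\nu_3}. \] Suppose there exist constants $\nu_2,\nu_3$ with $\nu_2\neq0$ and $\nu_3\neq0$ such that $\bar\nu_2\to\nu_2$ and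 $\bar\nu_3\to\nu_3$ in probability as $n\to\infty$. Then $\hat\theta_y\to\theta_y$ in probability as $n\to\infty$ for each $y\in\{1,2\mathrm A,2\mathrm B,3,4\}$, where \begin{align*} \theta_1&=\Delta_1+\tfrac12(\Delta_3+\Delta_5+\Delta_7)+\tfrac14\Delta_8,\quad \theta_{2\mathrm A}=\Delta_1+\Delta_2+\Delta_3+\Delta_4,\quad \theta_{2\mathrm B}=\Delta_1+\Delta_2+\Delta_5+\Delta_6,\\ \theta_3&=\Delta_1+\Delta_2+\Delta_3+\Delta_5+\Delta_7+\tfrac12(\Delta_4+\Delta_6+\Delta_8),\quad \theta_4=\tfrac12(\Delta_4-\Delta_6). \end{align*}
   Context: $\boldsymbol\Delta$ is the vector of Jacquard's identity coefficients (probabilities of the nine identity-by-descent modes) for a pair of diploid individuals A, B, common to all loci; $p_i$ is the frequency of allele 1 at the $i$-th independent biallelic locus. The genotype label $abcd$ means A has unordered genotype $a/b$ and B has unordered genotype $c/d$ (e.g. $1101$: A is $1/1$, B is $0/1$). *)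

theory Defs
  imports "HOL-Probability.Probability"
begin

text \<open>Joint genotypes: G_abcd means A has genotype a/b and B has genotype c/d.\<close>
datatype genotype = G0000 | G1111 | G1101 | G0111 | G0101 | G1100 | G0011 | G0100 | G0001

text \<open>Jacquard coefficients are indexed D 1, ..., D 9.\<close>
definition prob_vector9 :: "(nat \<Rightarrow> real) \<Rightarrow> bool" where
  "prob_vector9 D \<longleftrightarrow> (\<forall>k\<in>{1..9}. 0 \<le> D k) \<and> (\<Sum>k=1..9. D k) = 1"

fun geno_prob :: "(nat \<Rightarrow> real) \<Rightarrow> real \<Rightarrow> genotype \<Rightarrow> real" where
  "geno_prob D p G0000 = (let q = 1 - p in
      q * D 1 + q^2 * (D 2 + D 3 + D 5 + D 7) + q^3 * (D 4 + D 6 + D 8) + q^4 * D 9)"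
| "geno_prob D p G1111 =
      p * D 1 + p^2 * (D 2 + D 3 + D 5 + D 7) + p^3 * (D 4 + D 6 + D 8) + p^4 * D 9"
| "geno_prob D p G1101 = (let q = 1 - p in p * q * (D 3 + p * (D 8 + 2 * D 4 + 2 * p * D 9)))"
| "geno_prob D p G0111 = (let q = 1 - p in p * q * (D 5 + p * (D 8 + 2 * D 6 + 2 * p * D 9)))"
| "geno_prob D p G0101 = (let q = 1 - p in p * q * (2 * D 7 + q * D 8 + 4 * p * q * D 9))"
| "geno_prob D p G1100 = (let q = 1 - p in p * q * (D 2 + q * D 4 + p * D 6 + p * q * D 9))"
| "geno_prob D p G0011 = (let q = 1 - p in p * q * (D 2 + q * D 6 + p * D 4 + p * q * D 9))"
| "geno_prob D p G0100 = (let q = 1 - p in p * q * (D 5 + q * D 8 + 2 * q * D 6 + 2 * q^2 * D 9))"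
| "geno_prob D p G0001 = (let q = 1 - p in p * q * (D 3 + q * D 8 + 2 * q * D 4 + 2 * q^2 * D 9))"

definition fhat :: "(nat \<Rightarrow> 'a \<Rightarrow> genotype) \<Rightarrow> nat \<Rightarrow> genotype \<Rightarrow> 'a \<Rightarrow> real" where
  "fhat X n x \<omega> = (1 / real n) * (\<Sum>i=1..n. if X i \<omega> = x then 1 else 0)"

definition nu2bar :: "(nat \<Rightarrow> real) \<Rightarrow> nat \<Rightarrow> real" where
  "nu2bar p n = (1 / real n) * (\<Sum>i=1..n. p i * (1 - p i))"

definition nu3bar :: "(nat \<Rightarrow> real) \<Rightarrow> nat \<Rightarrow> real" where
  "nu3bar p n = (1 / real n) * (\<Sum>i=1..n. p i * (1 - p i) * (1 - 2 * p i))"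

datatype est = E1 | E2A | E2B | E3 | E4

definition tau1A where
  "tau1A X n \<omega> = (1/2) * (fhat X n G1101 \<omega> + fhat X n G0100 \<omega>) + (1/4) * fhat X n G0101 \<omega>
     + fhat X n G1100 \<omega>"
definition tau1B where
  "tau1B X n \<omega> = (1/2) * (fhat X n G0111 \<omega> + fhat X n G0001 \<omega>) + (1/4) * fhat X n G0101 \<omega>
     + fhat X n G0011 \<omega>"
definition tau1 where
  "tau1 X n \<omega> = (1/2) * (tau1A X n \<omega> + tau1B X n \<omega>)"
definition tau2A where
  "tau2A X n \<omega> = (1/2) * (fhat X n G0111 \<omega> + fhat X n G0101 \<omega> + fhat X n G0100 \<omega>)"
definition tau2B where
  "tau2B X n \<omega> = (1/2) * (fhat X n G1101 \<omega> + fhat X n G0101 \<omega> + fhat X n G0001 \<omega>)"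
definition tau3 where
  "tau3 X n \<omega> = (1/4) * ((fhat X n G0100 \<omega> - fhat X n G0111 \<omega>) + (fhat X n G0001 \<omega> - fhat X n G1101 \<omega>))"
definition tau4 where
  "tau4 X n \<omega> = (1/2) * (fhat X n G1100 \<omega> - fhat X n G0011 \<omega>)"

fun theta_hat :: "(nat \<Rightarrow> real) \<Rightarrow> (nat \<Rightarrow> 'a \<Rightarrow> genotype) \<Rightarrow> est \<Rightarrow> nat \<Rightarrow> 'a \<Rightarrow> real" where
  "theta_hat p X E1 n \<omega> = 1 - tau1 X n \<omega> / nu2bar p n"
| "theta_hat p X E2A n \<omega> = 1 - tau2A X n \<omega> / nu2bar p n"
| "theta_hat p X E2B n \<omega> = 1 - tau2B X n \<omega> / nu2bar p n"
| "theta_hat p X E3 n \<omega> = 1 - tau3 X n \<omega> / nu3bar p n"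
| "theta_hat p X E4 n \<omega> = tau4 X n \<omega> / nu3bar p n"

fun theta :: "(nat \<Rightarrow> real) \<Rightarrow> est \<Rightarrow> real" where
  "theta D E1 = D 1 + (1/2) * (D 3 + D 5 + D 7) + (1/4) * D 8"
| "theta D E2A = D 1 + D 2 + D 3 + D 4"
| "theta D E2B = D 1 + D 2 + D 5 + D 6"
| "theta D E3 = D 1 + D 2 + D 3 + D 5 + D 7 + (1/2) * (D 4 + D 6 + D 8)"
| "theta D E4 = (1/2) * (D 4 - D 6)"

definition conv_in_prob :: "'a measure \<Rightarrow> (nat \<Rightarrow> 'a \<Rightarrow> real) \<Rightarrow> real \<Rightarrow> bool" where
  "conv_in_prob M Y c \<longleftrightarrow>
     (\<forall>e>0. (\<lambda>n. measure M {\<omega> \<in> space M. e < \<bar>Y n \<omega> - c\<bar>}) \<longlonglongrightarrow> 0)"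

end

theory Submission
  imports Defs
begin

(* Each estimator is an affine function of a ratio T n / V n, where T n is the average of
   c (X i) over i = 1..n for a fixed weight function c on genotypes and V n is nu2bar or nu3bar.
   By Hoeffding's inequality for the independent bounded variables c (X i), T n is close in
   probability to its mean, and the weights are chosen so that the mean of c (X i) is a constant
   multiple k of p i * (1 - p i), resp. of p i * (1 - p i) * (1 - 2 * p i).  So T n - k * V n
   tends to 0 in probability, and since V n tends to a nonzero limit, T n / V n tends to k. *)

lemma (in prob_space) wlln_bounded:
  fixes Y :: "nat \<Rightarrow> 'a \<Rightarrow> real"
  assumes indep: "indep_vars (\<lambda>_. borel) Y {1..}"
    and bounded: "\<And>i \<omega>. i \<ge> 1 \<Longrightarrow> \<omega> \<in> space M \<Longrightarrow> \<bar>Y i \<omega>\<bar> \<le> B"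
  shows "conv_in_prob M (\<lambda>n \<omega>. (\<Sum>i=1..n. Y i \<omega> - expectation (Y i)) / real n) 0"
  unfolding conv_in_prob_def
proof (intro allI impI)
  fix e :: real assume e: "e > 0"
  define C where "C = max B 1"
  have "C > 0" by (simp add: C_def)
  have bound: "prob {\<omega>\<in>space M. e < \<bar>(\<Sum>i=1..n. Y i \<omega> - expectation (Y i)) / real n - 0\<bar>}
      \<le> 2 * exp (- (e\<^sup>2 / (2 * C\<^sup>2)) * real n)" if "n \<ge> 1" for n
  proof -
    interpret Hoeffding_ineq M "{1..n}" Y "\<lambda>_. - C" "\<lambda>_. C" "\<Sum>i=1..n. expectation (Y i)"
    proof unfold_locales
      show "indep_vars (\<lambda>_. borel) Y {1..n}"
        by (rule indep_vars_subset[OF indep]) auto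
      show "AE \<omega> in M. Y i \<omega> \<in> {- C..C}" if "i \<in> {1..n}" for i
        using bounded[of i] that by (intro AE_I2) (force simp: C_def abs_le_iff)
    qed simp_all
    have "prob {\<omega>\<in>space M. e < \<bar>(\<Sum>i=1..n. Y i \<omega> - expectation (Y i)) / real n - 0\<bar>}
        \<le> prob {\<omega>\<in>space M. \<bar>(\<Sum>i\<in>{1..n}. Y i \<omega>) - (\<Sum>i=1..n. expectation (Y i))\<bar> \<ge> e * n}"
      using that by (intro finite_measure_mono)
        (auto simp: sum_subtractf abs_divide field_simps)
    also have "\<dots> \<le> 2 * exp (-2 * (e * n)\<^sup>2 / (\<Sum>i\<in>{1..n}. (C - - C)\<^sup>2))"
      using \<open>C > 0\<close> e that by (intro Hoeffding_ineq_abs_ge) auto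
    also have "\<dots> = 2 * exp (- (e\<^sup>2 / (2 * C\<^sup>2)) * real n)"
      using that by (simp add: power2_eq_square field_simps)
    finally show ?thesis .
  qed
  have "(\<lambda>n. 2 * exp (- (e\<^sup>2 / (2 * C\<^sup>2))) ^ n) \<longlonglongrightarrow> 0"
    using e \<open>C > 0\<close> by (intro tendsto_mult_right_zero LIMSEQ_power_zero) auto
  then have limit: "(\<lambda>n. 2 * exp (- (e\<^sup>2 / (2 * C\<^sup>2)) * real n)) \<longlonglongrightarrow> 0"
    by (simp only: exp_of_nat2_mult)
  show "(\<lambda>n. prob {\<omega>\<in>space M. e < \<bar>(\<Sum>i=1..n. Y i \<omega> - expectation (Y i)) / real n - 0\<bar>}) \<longlonglongrightarrow> 0"
    by (rule tendsto_sandwich[OF _ eventually_sequentiallyI[of 1, OF bound] tendsto_const limit])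
      simp_all
qed

lemma (in prob_space) expectation_finite_valued:
  fixes X :: "'a \<Rightarrow> 'b::finite"
  assumes [measurable]: "X \<in> measurable M (count_space UNIV)"
  shows "expectation (\<lambda>\<omega>. c (X \<omega>)) = (\<Sum>x\<in>UNIV. c x * prob {\<omega>\<in>space M. X \<omega> = x})"
proof -
  have [measurable]: "{\<omega>\<in>space M. X \<omega> = x} \<in> events" for x
    by measurable
  have "expectation (\<lambda>\<omega>. c (X \<omega>)) = expectation (\<lambda>\<omega>. \<Sum>x\<in>UNIV. c x * indicator {\<omega>\<in>space M. X \<omega> = x} \<omega>)"
    by (intro Bochner_Integration.integral_cong) (auto simp: indicator_def)
  also have "\<dots> = (\<Sum>x\<in>UNIV. c x * prob {\<omega>\<in>space M. X \<omega> = x})"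
    by (subst Bochner_Integration.integral_sum) (auto simp: measure_def less_top[symmetric])
  finally show ?thesis .
qed

lemma (in prob_space) wlln_finite_valued:
  fixes X :: "nat \<Rightarrow> 'a \<Rightarrow> 'b::finite"
  assumes indep: "indep_vars (\<lambda>_. count_space UNIV) X {1..}"
  shows "conv_in_prob M
    (\<lambda>n \<omega>. (\<Sum>i=1..n. c (X i \<omega>) - (\<Sum>x\<in>UNIV. c x * prob {\<omega>\<in>space M. X i \<omega> = x})) / real n) 0"
proof -
  have "X i \<in> measurable M (count_space UNIV)" if "i \<ge> 1" for i
    using indep that by (auto simp: indep_vars_def)
  then have mean: "expectation (\<lambda>\<omega>. c (X i \<omega>)) = (\<Sum>x\<in>UNIV. c x * prob {\<omega>\<in>space M. X i \<omega> = x})"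
    if "i \<ge> 1" for i
    using that by (simp add: expectation_finite_valued)
  have "conv_in_prob M (\<lambda>n \<omega>. (\<Sum>i=1..n. c (X i \<omega>) - expectation (\<lambda>\<omega>. c (X i \<omega>))) / real n) 0"
  proof (rule wlln_bounded)
    show "indep_vars (\<lambda>_. borel) (\<lambda>i \<omega>. c (X i \<omega>)) {1..}"
      by (rule indep_vars_compose2[OF indep]) simp
    show "\<bar>c (X i \<omega>)\<bar> \<le> (\<Sum>x\<in>UNIV. \<bar>c x\<bar>)" for i \<omega>
      by (rule member_le_sum) auto
  qed
  then show ?thesis
    by (simp add: mean)
qed

lemma conv_in_prob_const_diff:
  assumes "conv_in_prob M Z (a - c)"
  shows "conv_in_prob M (\<lambda>n \<omega>. a - Z n \<omega>) c"
proof -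
  have "\<bar>a - Z n \<omega> - c\<bar> = \<bar>Z n \<omega> - (a - c)\<bar>" for n \<omega>
    by arith
  with assms show ?thesis
    by (simp only: conv_in_prob_def)
qed

lemma conv_in_prob_const_imp_LIMSEQ:
  assumes "prob_space M" and "conv_in_prob M (\<lambda>n _. V n) \<nu>"
  shows "V \<longlonglongrightarrow> \<nu>"
proof (rule LIMSEQ_I)
  fix e :: real assume "e > 0"
  have "(\<lambda>n. measure M {\<omega>\<in>space M. e / 2 < \<bar>V n - \<nu>\<bar>}) \<longlonglongrightarrow> 0"
    by (rule assms(2)[unfolded conv_in_prob_def, rule_format]) (use \<open>e > 0\<close> in simp)
  then have "eventually (\<lambda>n. measure M {\<omega>\<in>space M. e / 2 < \<bar>V n - \<nu>\<bar>} < 1) sequentially"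
    by (rule order_tendstoD) simp
  moreover have "measure M {\<omega>\<in>space M. e / 2 < \<bar>V n - \<nu>\<bar>} = (if e / 2 < \<bar>V n - \<nu>\<bar> then 1 else 0)" for n
    using prob_space.prob_space[OF assms(1)] by simp
  ultimately have "eventually (\<lambda>n. \<bar>V n - \<nu>\<bar> \<le> e / 2) sequentially"
    by (auto elim: eventually_mono split: if_splits)
  then obtain N where "\<And>n. n \<ge> N \<Longrightarrow> \<bar>V n - \<nu>\<bar> \<le> e / 2"
    by (auto simp: eventually_sequentially)
  with \<open>e > 0\<close> show "\<exists>N. \<forall>n\<ge>N. norm (V n - \<nu>) < e"
    by force
qed

lemma conv_in_prob_divide:
  fixes T :: "nat \<Rightarrow> 'a \<Rightarrow> real"
  assumes "prob_space M"
    and T_meas [measurable]: "\<And>n. T n \<in> borel_measurable M"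
    and T_conv: "conv_in_prob M (\<lambda>n \<omega>. T n \<omega> - k * V n) 0"
    and "V \<longlonglongrightarrow> \<nu>" and "\<nu> \<noteq> 0"
  shows "conv_in_prob M (\<lambda>n \<omega>. T n \<omega> / V n) k"
  unfolding conv_in_prob_def
proof (intro allI impI)
  interpret prob_space M by fact
  fix e :: real assume "e > 0"
  have "(\<lambda>n. \<bar>V n\<bar>) \<longlonglongrightarrow> \<bar>\<nu>\<bar>"
    by (intro tendsto_intros) fact
  then have "eventually (\<lambda>n. \<bar>\<nu>\<bar> / 2 < \<bar>V n\<bar>) sequentially"
    by (rule order_tendstoD) (use \<open>\<nu> \<noteq> 0\<close> in simp)
  then have smaller: "eventually (\<lambda>n. prob {\<omega>\<in>space M. e < \<bar>T n \<omega> / V n - k\<bar>}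
      \<le> prob {\<omega>\<in>space M. e * (\<bar>\<nu>\<bar> / 2) < \<bar>T n \<omega> - k * V n - 0\<bar>}) sequentially"
  proof (rule eventually_mono)
    fix n assume V_large: "\<bar>\<nu>\<bar> / 2 < \<bar>V n\<bar>"
    then have "\<bar>V n\<bar> > 0" by linarith
    have event_mono: "e * (\<bar>\<nu>\<bar> / 2) < \<bar>T n \<omega> - k * V n - 0\<bar>" if "e < \<bar>T n \<omega> / V n - k\<bar>" for \<omega>
    proof -
      have "T n \<omega> / V n - k = (T n \<omega> - k * V n) / V n"
        using \<open>\<bar>V n\<bar> > 0\<close> by (simp add: diff_divide_distrib)
      with that \<open>\<bar>V n\<bar> > 0\<close> have "e * \<bar>V n\<bar> < \<bar>T n \<omega> - k * V n\<bar>"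
        by (simp add: abs_divide pos_less_divide_eq)
      moreover have "e * (\<bar>\<nu>\<bar> / 2) \<le> e * \<bar>V n\<bar>"
        using V_large \<open>e > 0\<close> by simp
      ultimately show ?thesis by linarith
    qed
    show "prob {\<omega>\<in>space M. e < \<bar>T n \<omega> / V n - k\<bar>}
        \<le> prob {\<omega>\<in>space M. e * (\<bar>\<nu>\<bar> / 2) < \<bar>T n \<omega> - k * V n - 0\<bar>}"
    proof (rule finite_measure_mono)
      show "{\<omega>\<in>space M. e * (\<bar>\<nu>\<bar> / 2) < \<bar>T n \<omega> - k * V n - 0\<bar>} \<in> events"
        by measurable
    qed (use event_mono in blast)
  qed
  have limit: "(\<lambda>n. prob {\<omega>\<in>space M. e * (\<bar>\<nu>\<bar> / 2) < \<bar>T n \<omega> - k * V n - 0\<bar>}) \<longlonglongrightarrow> 0"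
    by (rule T_conv[unfolded conv_in_prob_def, rule_format]) (use \<open>e > 0\<close> \<open>\<nu> \<noteq> 0\<close> in simp)
  show "(\<lambda>n. prob {\<omega>\<in>space M. e < \<bar>T n \<omega> / V n - k\<bar>}) \<longlonglongrightarrow> 0"
    by (rule tendsto_sandwich[OF _ smaller tendsto_const limit]) simp
qed

lemma UNIV_genotype: "(UNIV :: genotype set) = {G0000, G1111, G1101, G0111, G0101, G1100, G0011, G0100, G0001}"
  using genotype.exhaust by auto

instance genotype :: finite
  by standard (simp add: UNIV_genotype)

lemma sum_weighted_fhat:
  "(\<Sum>x\<in>UNIV. c x * fhat X n x \<omega>) = (\<Sum>i=1..n. c (X i \<omega>)) / real n"
proof -
  have pick: "(\<Sum>x\<in>UNIV. c x * (if X i \<omega> = x then 1 else 0)) = c (X i \<omega>)" for i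
    by (cases "X i \<omega>") (simp_all add: UNIV_genotype)
  have "(\<Sum>x\<in>UNIV. c x * fhat X n x \<omega>)
      = (\<Sum>x\<in>UNIV. \<Sum>i=1..n. c x * (if X i \<omega> = x then 1 else 0)) / real n"
    unfolding fhat_def sum_divide_distrib sum_distrib_left by (simp add: ac_simps)
  also have "\<dots> = (\<Sum>i=1..n. \<Sum>x\<in>UNIV. c x * (if X i \<omega> = x then 1 else 0)) / real n"
    by (subst sum.swap) (rule refl)
  also have "\<dots> = (\<Sum>i=1..n. c (X i \<omega>)) / real n"
    by (simp only: pick)
  finally show ?thesis .
qed

fun tau_weight :: "est \<Rightarrow> genotype \<Rightarrow> real" where
  "tau_weight E1 x = (if x \<in> {G1100, G0011} then 1/2
     else if x \<in> {G1101, G0100, G0101, G0111, G0001} then 1/4 else 0)"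
| "tau_weight E2A x = (if x \<in> {G0111, G0101, G0100} then 1/2 else 0)"
| "tau_weight E2B x = (if x \<in> {G1101, G0101, G0001} then 1/2 else 0)"
| "tau_weight E3 x = (if x \<in> {G0100, G0001} then 1/4 else if x \<in> {G0111, G1101} then -1/4 else 0)"
| "tau_weight E4 x = (if x = G1100 then 1/2 else if x = G0011 then -1/2 else 0)"

lemma tau_eq_sum_tau_weight:
  "tau1 X n \<omega> = (\<Sum>x\<in>UNIV. tau_weight E1 x * fhat X n x \<omega>)"
  "tau2A X n \<omega> = (\<Sum>x\<in>UNIV. tau_weight E2A x * fhat X n x \<omega>)"
  "tau2B X n \<omega> = (\<Sum>x\<in>UNIV. tau_weight E2B x * fhat X n x \<omega>)"
  "tau3 X n \<omega> = (\<Sum>x\<in>UNIV. tau_weight E3 x * fhat X n x \<omega>)"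
  "tau4 X n \<omega> = (\<Sum>x\<in>UNIV. tau_weight E4 x * fhat X n x \<omega>)"
  by (simp_all add: UNIV_genotype tau1_def tau1A_def tau1B_def tau2A_def tau2B_def tau3_def tau4_def
      algebra_simps)

lemma theta_hat_eq_sum_tau_weight:
  "theta_hat p X E1 = (\<lambda>n \<omega>. 1 - (\<Sum>x\<in>UNIV. tau_weight E1 x * fhat X n x \<omega>) / nu2bar p n)"
  "theta_hat p X E2A = (\<lambda>n \<omega>. 1 - (\<Sum>x\<in>UNIV. tau_weight E2A x * fhat X n x \<omega>) / nu2bar p n)"
  "theta_hat p X E2B = (\<lambda>n \<omega>. 1 - (\<Sum>x\<in>UNIV. tau_weight E2B x * fhat X n x \<omega>) / nu2bar p n)"
  "theta_hat p X E3 = (\<lambda>n \<omega>. 1 - (\<Sum>x\<in>UNIV. tau_weight E3 x * fhat X n x \<omega>) / nu3bar p n)"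
  "theta_hat p X E4 = (\<lambda>n \<omega>. (\<Sum>x\<in>UNIV. tau_weight E4 x * fhat X n x \<omega>) / nu3bar p n)"
  by (simp_all add: fun_eq_iff tau_eq_sum_tau_weight)

lemma prob_vector9_D1: "prob_vector9 D \<Longrightarrow> D 1 = 1 - (D 2 + D 3 + D 4 + D 5 + D 6 + D 7 + D 8 + D 9)"
  by (simp add: prob_vector9_def numeral_eq_Suc sum.atLeast_Suc_atMost)

lemma sum_geno_prob:
  assumes "prob_vector9 D"
  shows "(\<Sum>x\<in>UNIV. geno_prob D t x) = 1 - D 8 * t\<^sup>2 * (1 - t)"
  using prob_vector9_D1[OF assms]
  by (simp add: UNIV_genotype Let_def field_simps power2_eq_square power3_eq_cube power4_eq_xxxx)

lemma tau_weight_mean: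
  assumes "prob_vector9 D" and "D 8 = 0"
  shows "(\<Sum>x\<in>UNIV. tau_weight E1 x * geno_prob D t x) = (1 - theta D E1) * (t * (1 - t))"
    and "(\<Sum>x\<in>UNIV. tau_weight E2A x * geno_prob D t x) = (1 - theta D E2A) * (t * (1 - t))"
    and "(\<Sum>x\<in>UNIV. tau_weight E2B x * geno_prob D t x) = (1 - theta D E2B) * (t * (1 - t))"
    and "(\<Sum>x\<in>UNIV. tau_weight E3 x * geno_prob D t x) = (1 - theta D E3) * (t * (1 - t) * (1 - 2 * t))"
    and "(\<Sum>x\<in>UNIV. tau_weight E4 x * geno_prob D t x) = theta D E4 * (t * (1 - t) * (1 - 2 * t))"
  using assms(2)
  by (simp_all only: theta.simps prob_vector9_D1[OF assms(1)])
    (simp_all add: UNIV_genotype Let_def field_simps power2_eq_square power3_eq_cube)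

(* The genotype probabilities sum to 1 - D 8 * p^2 * (1 - p), so a genuine genotype distribution
   forces D 8 = 0 unless every p i is 0 or 1, which the nonzero limit of nu2bar excludes. *)
lemma (in prob_space) geno_prob_D8_eq_0:
  assumes "prob_vector9 D"
    and X_meas: "\<And>i. i \<ge> 1 \<Longrightarrow> X i \<in> measurable M (count_space UNIV)"
    and X_distr: "\<And>i x. i \<ge> 1 \<Longrightarrow> prob {\<omega>\<in>space M. X i \<omega> = x} = geno_prob D (p i) x"
    and "nu2bar p \<longlonglongrightarrow> \<nu>" and "\<nu> \<noteq> 0"
  shows "D 8 = 0"
proof (rule ccontr)
  assume "D 8 \<noteq> 0"
  have vanish: "p i * (1 - p i) = 0" if "i \<ge> 1" for i
  proof -
    have "expectation (\<lambda>\<omega>. (\<lambda>_. 1 :: real) (X i \<omega>))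
        = (\<Sum>x\<in>UNIV. 1 * prob {\<omega>\<in>space M. X i \<omega> = x})"
      by (rule expectation_finite_valued[OF X_meas[OF that]])
    then have "1 = (\<Sum>x\<in>UNIV. geno_prob D (p i) x)"
      using that by (simp add: prob_space X_distr)
    also have "\<dots> = 1 - D 8 * (p i)\<^sup>2 * (1 - p i)"
      by (rule sum_geno_prob) fact
    finally show ?thesis
      using \<open>D 8 \<noteq> 0\<close> by (simp add: power2_eq_square)
  qed
  have "(\<Sum>i=1..n. p i * (1 - p i)) = 0" for n
    by (rule sum.neutral, rule ballI, rule vanish) simp
  then have "nu2bar p = (\<lambda>_. 0)"
    by (simp add: nu2bar_def fun_eq_iff)
  with \<open>nu2bar p \<longlonglongrightarrow> \<nu>\<close> \<open>\<nu> \<noteq> 0\<close> show False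
    using LIMSEQ_unique tendsto_const by metis
qed

lemma (in prob_space) conv_in_prob_weighted_fhat_ratio:
  fixes X :: "nat \<Rightarrow> 'a \<Rightarrow> genotype"
  assumes indep: "indep_vars (\<lambda>_. count_space UNIV) X {1..}"
    and mean: "\<And>i. i \<ge> 1 \<Longrightarrow> (\<Sum>x\<in>UNIV. c x * prob {\<omega>\<in>space M. X i \<omega> = x}) = k * w i"
    and V: "\<And>n. V n = (1 / real n) * (\<Sum>i=1..n. w i)"
    and "V \<longlonglongrightarrow> \<nu>" and "\<nu> \<noteq> 0"
  shows "conv_in_prob M (\<lambda>n \<omega>. (\<Sum>x\<in>UNIV. c x * fhat X n x \<omega>) / V n) k"
proof (rule conv_in_prob_divide)
  have [measurable]: "X i \<in> measurable M (count_space UNIV)" if "i \<ge> 1" for i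
    using indep that by (auto simp: indep_vars_def)
  show "(\<lambda>\<omega>. \<Sum>x\<in>UNIV. c x * fhat X n x \<omega>) \<in> borel_measurable M" for n
    unfolding sum_weighted_fhat by measurable
  have "(\<Sum>i=1..n. c (X i \<omega>) - (\<Sum>x\<in>UNIV. c x * prob {\<omega>\<in>space M. X i \<omega> = x})) / real n
      = (\<Sum>x\<in>UNIV. c x * fhat X n x \<omega>) - k * V n" for n \<omega>
    by (simp add: sum_weighted_fhat V mean sum_subtractf sum_distrib_left sum_divide_distrib
        diff_divide_distrib)
  with wlln_finite_valued[OF indep, of c]
  show "conv_in_prob M (\<lambda>n \<omega>. (\<Sum>x\<in>UNIV. c x * fhat X n x \<omega>) - k * V n) 0"
    by simp
qed (fact prob_space_axioms | fact)+

theorem theorem5: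
  fixes M :: "'a measure" and D :: "nat \<Rightarrow> real" and p :: "nat \<Rightarrow> real"
    and X :: "nat \<Rightarrow> 'a \<Rightarrow> genotype" and nu2 nu3 :: real
  assumes "prob_space M"
    and "prob_vector9 D"
    and "\<forall>i\<ge>1. 0 \<le> p i \<and> p i \<le> 1"
    and "prob_space.indep_vars M (\<lambda>_. count_space UNIV) X {1..}"
    and "\<forall>i\<ge>1. \<forall>x. measure M {\<omega> \<in> space M. X i \<omega> = x} = geno_prob D (p i) x"
    and "nu2 \<noteq> 0" and "nu3 \<noteq> 0"
    and "conv_in_prob M (\<lambda>n _. nu2bar p n) nu2"
    and "conv_in_prob M (\<lambda>n _. nu3bar p n) nu3"
  shows "\<forall>y. conv_in_prob M (theta_hat p X y) (theta D y)"
proof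
  interpret prob_space M by fact
  have X_meas: "X i \<in> measurable M (count_space UNIV)" if "i \<ge> 1" for i
    using assms(4) that by (auto simp: indep_vars_def)
  have nu2: "nu2bar p \<longlonglongrightarrow> nu2" and nu3: "nu3bar p \<longlonglongrightarrow> nu3"
    using conv_in_prob_const_imp_LIMSEQ assms(1,8,9) by blast+
  have "D 8 = 0"
    by (rule geno_prob_D8_eq_0[OF assms(2) X_meas _ nu2 assms(6)]) (use assms(5) in auto)
  note mean = tau_weight_mean[OF assms(2) this]
  have ratio: "conv_in_prob M (\<lambda>n \<omega>. (\<Sum>x\<in>UNIV. tau_weight y x * fhat X n x \<omega>) / V n) k"
    if mean_y: "\<And>t. (\<Sum>x\<in>UNIV. tau_weight y x * geno_prob D t x) = k * s t"
      and V: "\<And>n. V n = (1 / real n) * (\<Sum>i=1..n. s (p i))" and "V \<longlonglongrightarrow> \<nu>" and "\<nu> \<noteq> 0"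
    for y k s V \<nu>
    by (rule conv_in_prob_weighted_fhat_ratio[OF assms(4) _ V that(3,4)]) (use assms(5) mean_y in simp)
  fix y
  show "conv_in_prob M (theta_hat p X y) (theta D y)"
    using conv_in_prob_const_diff[OF ratio[OF mean(1) nu2bar_def nu2 assms(6)]]
      conv_in_prob_const_diff[OF ratio[OF mean(2) nu2bar_def nu2 assms(6)]]
      conv_in_prob_const_diff[OF ratio[OF mean(3) nu2bar_def nu2 assms(6)]]
      conv_in_prob_const_diff[OF ratio[OF mean(4) nu3bar_def nu3 assms(7)]]
      ratio[OF mean(5) nu3bar_def nu3 assms(7)]
    by (cases y) (simp_all only: theta_hat_eq_sum_tau_weight)
qed

end
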